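(* Let $\tau$ be a primitive substitution with fixed point $X_\tau$. Then for any two non-empty prefixes $u,v$ of $X_\tau$, the return substitutions $\tau_u$ and $\tau_v$ have the same non-zero eigenvalues.
   Context: A substitution is a triple $(\tau,A,a)$: $A$ a finite alphabet, $\tau:A\to A^+$ a morphism (extended by concatenation), $a\in A$ with $\tau(a)$ starting with $a$; its fixed point $X_\tau$ is the unique sequence starting with $a$ with $\tau(X_\tau)=X_\tau$. Its matrix $M_\tau$ has $(i,j)$ entry the number of occurrences of $i$ in $\tau(j)$; eigenvalues of a substitution (or morphism $B\to B^+$) mean eigenvalues of its matrix. $\tau$ is primitive if some power of $M_\tau$ is positive; then $X_\tau$ is uniformly recurrent. For a non-empty prefix $u$ of $X_\tau$, a return word on $u$ is a factor $X_{[i,j-1]}$ where $i<j$ are successive occurrences of $u$; there are finitely many, and $X_\tau$ factors uniquely as a concatenation $m_0m_1\cdots$ of return words. Enumerating return words in order of first appearance gives a bijection $\Theta_u$ from $R_u=\{1,\dots,N\}$ to the return words, extended to an injective morphism $R_u^*\to A^*$. The return substitution on $u$ is the unique morphism $\tau_u:R_u\to R_u^+$ with $\Theta_u\tau_u=\tau\Theta_u$. *)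

theory Defs
  imports Complex_Main
begin

definition substitution :: "'a set \<Rightarrow> ('a \<Rightarrow> 'a list) \<Rightarrow> 'a \<Rightarrow> bool" where
  "substitution A \<tau> a \<longleftrightarrow> finite A \<and> a \<in> A \<and>
     (\<forall>b\<in>A. \<tau> b \<noteq> [] \<and> set (\<tau> b) \<subseteq> A) \<and> hd (\<tau> a) = a"

definition subst_matrix :: "('b \<Rightarrow> 'b list) \<Rightarrow> 'b \<Rightarrow> 'b \<Rightarrow> nat" where
  "subst_matrix \<sigma> i j = count_list (\<sigma> j) i"

definition mat_mult_on :: "'b set \<Rightarrow> ('b \<Rightarrow> 'b \<Rightarrow> nat) \<Rightarrow> ('b \<Rightarrow> 'b \<Rightarrow> nat) \<Rightarrow> 'b \<Rightarrow> 'b \<Rightarrow> nat" where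
  "mat_mult_on B M N i j = (\<Sum>k\<in>B. M i k * N k j)"

fun mat_pow_on :: "'b set \<Rightarrow> ('b \<Rightarrow> 'b \<Rightarrow> nat) \<Rightarrow> nat \<Rightarrow> 'b \<Rightarrow> 'b \<Rightarrow> nat" where
  "mat_pow_on B M 0 = (\<lambda>i j. if i = j then 1 else 0)"
| "mat_pow_on B M (Suc n) = mat_mult_on B (mat_pow_on B M n) M"

definition primitive :: "'a set \<Rightarrow> ('a \<Rightarrow> 'a list) \<Rightarrow> bool" where
  "primitive A \<tau> \<longleftrightarrow> (\<exists>n>0. \<forall>i\<in>A. \<forall>j\<in>A. mat_pow_on A (subst_matrix \<tau>) n i j > 0)"

definition mat_eigenvalue_on :: "'b set \<Rightarrow> ('b \<Rightarrow> 'b \<Rightarrow> nat) \<Rightarrow> complex \<Rightarrow> bool" where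
  "mat_eigenvalue_on B M \<mu> \<longleftrightarrow>
     (\<exists>v :: 'b \<Rightarrow> complex. (\<exists>i\<in>B. v i \<noteq> 0) \<and>
        (\<forall>i\<in>B. (\<Sum>j\<in>B. of_nat (M i j) * v j) = \<mu> * v i))"

definition subst_eigenvalue :: "'b set \<Rightarrow> ('b \<Rightarrow> 'b list) \<Rightarrow> complex \<Rightarrow> bool" where
  "subst_eigenvalue B \<sigma> \<mu> \<longleftrightarrow> mat_eigenvalue_on B (subst_matrix \<sigma>) \<mu>"

definition subst_word :: "('a \<Rightarrow> 'a list) \<Rightarrow> 'a list \<Rightarrow> 'a list" where
  "subst_word \<tau> w = concat (map \<tau> w)"

text \<open>X (an infinite word over A) is the fixed point of (tau, A, a): it starts with a and
  tau(X) = X, i.e. for every n, tau(X_0 ... X_{n-1}) is a prefix of X.\<close>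
definition is_fixed_point :: "'a set \<Rightarrow> ('a \<Rightarrow> 'a list) \<Rightarrow> 'a \<Rightarrow> (nat \<Rightarrow> 'a) \<Rightarrow> bool" where
  "is_fixed_point A \<tau> a X \<longleftrightarrow> X 0 = a \<and> (\<forall>i. X i \<in> A) \<and>
     (\<forall>n i. i < length (subst_word \<tau> (map X [0..<n])) \<longrightarrow>
              subst_word \<tau> (map X [0..<n]) ! i = X i)"

definition is_prefix_of :: "'a list \<Rightarrow> (nat \<Rightarrow> 'a) \<Rightarrow> bool" where
  "is_prefix_of u X \<longleftrightarrow> u = map X [0..<length u]"

definition occurs_at :: "(nat \<Rightarrow> 'a) \<Rightarrow> 'a list \<Rightarrow> nat \<Rightarrow> bool" where
  "occurs_at X u i \<longleftrightarrow> (\<forall>j<length u. X (i + j) = u ! j)"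

definition successive_occ :: "(nat \<Rightarrow> 'a) \<Rightarrow> 'a list \<Rightarrow> nat \<Rightarrow> nat \<Rightarrow> bool" where
  "successive_occ X u i j \<longleftrightarrow> i < j \<and> occurs_at X u i \<and> occurs_at X u j \<and>
     (\<forall>l. i < l \<and> l < j \<longrightarrow> \<not> occurs_at X u l)"

definition return_word :: "(nat \<Rightarrow> 'a) \<Rightarrow> 'a list \<Rightarrow> 'a list \<Rightarrow> bool" where
  "return_word X u w \<longleftrightarrow> (\<exists>i j. successive_occ X u i j \<and> w = map X [i..<j])"

definition first_return_pos :: "(nat \<Rightarrow> 'a) \<Rightarrow> 'a list \<Rightarrow> 'a list \<Rightarrow> nat" where
  "first_return_pos X u w = (LEAST i. \<exists>j. successive_occ X u i j \<and> w = map X [i..<j])"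

definition return_enum :: "(nat \<Rightarrow> 'a) \<Rightarrow> 'a list \<Rightarrow> nat \<Rightarrow> (nat \<Rightarrow> 'a list) \<Rightarrow> bool" where
  "return_enum X u N \<Theta> \<longleftrightarrow> bij_betw \<Theta> {1..N} {w. return_word X u w} \<and>
     strict_mono_on {1..N} (\<lambda>i. first_return_pos X u (\<Theta> i))"

definition return_subst ::
  "('a \<Rightarrow> 'a list) \<Rightarrow> (nat \<Rightarrow> 'a) \<Rightarrow> 'a list \<Rightarrow> nat \<Rightarrow> (nat \<Rightarrow> 'a list) \<Rightarrow> (nat \<Rightarrow> nat list) \<Rightarrow> bool" where
  "return_subst \<tau> X u N \<Theta> \<sigma> \<longleftrightarrow> return_enum X u N \<Theta> \<and>
     (\<forall>i\<in>{1..N}. \<sigma> i \<noteq> [] \<and> set (\<sigma> i) \<subseteq> {1..N} \<and>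
        concat (map \<Theta> (\<sigma> i)) = subst_word \<tau> (\<Theta> i))"

end

theory Submission
  imports Defs "HOL-Library.Sublist"
begin

text \<open>
  A power \<open>\<tau>\<^sup>n\<close> sends every occurrence of \<open>v\<close> in \<open>X = \<tau>\<^sup>n(X)\<close> to an occurrence of \<open>u\<close>:
  by primitivity \<open>\<tau>\<^sup>n(v)\<close> is a prefix of \<open>X\<close> longer than \<open>u\<close>. Hence \<open>\<tau>\<^sup>n\<close> maps each return word
  on \<open>v\<close> to a product of return words on \<open>u\<close>, which defines a morphism \<open>\<rho> : R\<^sub>v \<rightarrow> R\<^sub>u\<^sup>*\<close>.
  Return words on \<open>u\<close> form a code, so \<open>\<rho> \<tau>\<^sub>v = \<tau>\<^sub>u \<rho>\<close>, and with the symmetric \<open>\<rho>'\<close>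
  also \<open>\<rho>' \<rho> = \<tau>\<^sub>v\<^sup>m\<^sup>+\<^sup>n\<close>. For matrices this reads \<open>M\<^sub>\<rho> M\<^sub>v = M\<^sub>u M\<^sub>\<rho>\<close> and
  \<open>M\<^sub>\<rho>\<^sub>' M\<^sub>\<rho> = M\<^sub>v\<^sup>m\<^sup>+\<^sup>n\<close>, so \<open>M\<^sub>\<rho>\<close> sends an eigenvector of \<open>\<tau>\<^sub>v\<close> for \<open>\<mu> \<noteq> 0\<close> to a
  non-zero eigenvector of \<open>\<tau>\<^sub>u\<close> for \<open>\<mu>\<close>.
\<close>

section \<open>Morphisms of free monoids\<close>

definition morph :: "('b \<Rightarrow> 'c list) \<Rightarrow> 'b list \<Rightarrow> 'c list" where
  "morph f xs = concat (map f xs)"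

lemma subst_word_eq_morph: "subst_word = morph"
  by (intro ext) (simp add: subst_word_def morph_def)

lemma morph_Nil [simp]: "morph f [] = []"
  and morph_Cons [simp]: "morph f (x # xs) = f x @ morph f xs"
  and morph_append [simp]: "morph f (xs @ ys) = morph f xs @ morph f ys"
  and set_morph [simp]: "set (morph f xs) = (\<Union>x\<in>set xs. set (f x))"
  by (simp_all add: morph_def)

lemma morph_morph: "morph g (morph f xs) = morph (\<lambda>x. morph g (f x)) xs"
  by (induction xs) auto

lemma morph_singletons [simp]: "morph (\<lambda>x. [x]) xs = xs"
  by (induction xs) auto

lemma morph_cong: "(\<And>x. x \<in> set xs \<Longrightarrow> f x = g x) \<Longrightarrow> morph f xs = morph g xs"
  by (induction xs) auto

lemma morph_pow_Nil [simp]: "(morph (f :: 'a \<Rightarrow> 'a list) ^^ n) [] = []"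
  by (induction n) auto

lemma morph_pow_append:
  fixes f :: "'a \<Rightarrow> 'a list"
  shows "(morph f ^^ n) (xs @ ys) = (morph f ^^ n) xs @ (morph f ^^ n) ys"
  by (induction n) auto

lemma morph_pow_morph:
  fixes f :: "'a \<Rightarrow> 'a list"
  shows "(morph f ^^ n) (morph g xs) = morph (\<lambda>x. (morph f ^^ n) (g x)) xs"
  by (induction xs) (auto simp: morph_pow_append)

lemma set_morph_pow_subset:
  fixes f :: "'a \<Rightarrow> 'a list"
  assumes "\<forall>x\<in>B. set (f x) \<subseteq> B" and "set xs \<subseteq> B"
  shows "set ((morph f ^^ n) xs) \<subseteq> B"
  using assms by (induction n) auto

lemma length_morph_pow_ge:
  fixes f :: "'a \<Rightarrow> 'a list"
  assumes "\<forall>x\<in>B. f x \<noteq> [] \<and> set (f x) \<subseteq> B" and "set xs \<subseteq> B"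
  shows "length xs \<le> length ((morph f ^^ n) xs)"
proof -
  have "length ys \<le> length (morph f ys)" if "set ys \<subseteq> B" for ys
    using that assms(1) by (induction ys) (auto simp: Suc_le_eq neq_Nil_conv)
  moreover have "set ((morph f ^^ k) xs) \<subseteq> B" for k
    using assms by (intro set_morph_pow_subset) auto
  ultimately show ?thesis
    by (induction n) (auto intro: order_trans)
qed

section \<open>Matrices of morphisms\<close>

lemma count_list_morph:
  assumes "finite C" and "set xs \<subseteq> C"
  shows "count_list (morph g xs) i = (\<Sum>k\<in>C. count_list xs k * count_list (g k) i)"
  using assms(2)
proof (induction xs)
  case (Cons x xs)
  have "(\<Sum>k\<in>C. count_list (x # xs) k * count_list (g k) i) =
        (\<Sum>k\<in>C. count_list xs k * count_list (g k) i) + (\<Sum>k\<in>C. if x = k then count_list (g k) i else 0)"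
    by (auto simp: sum.distrib[symmetric] intro!: sum.cong)
  with Cons assms(1) show ?case
    by simp
qed simp

lemma mat_pow_on_subst_matrix:
  assumes "finite A" and "\<forall>b\<in>A. set (\<tau> b) \<subseteq> A" and "i \<in> A" and "j \<in> A"
  shows "mat_pow_on A (subst_matrix \<tau>) n i j = count_list ((morph \<tau> ^^ n) [j]) i"
  using assms(3,4)
proof (induction n arbitrary: i j)
  case (Suc n)
  have "mat_pow_on A (subst_matrix \<tau>) (Suc n) i j =
        (\<Sum>k\<in>A. count_list (\<tau> j) k * count_list ((morph \<tau> ^^ n) [k]) i)"
    unfolding mat_pow_on.simps mat_mult_on_def
    by (intro sum.cong refl) (simp add: Suc subst_matrix_def mult.commute)
  also have "\<dots> = count_list (morph (\<lambda>k. (morph \<tau> ^^ n) [k]) (\<tau> j)) i"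
    using assms Suc.prems by (simp add: count_list_morph)
  also have "\<dots> = count_list ((morph \<tau> ^^ n) (\<tau> j)) i"
    using morph_pow_morph[where f=\<tau> and g="\<lambda>k. [k]" and xs="\<tau> j"] by simp
  also have "\<dots> = count_list ((morph \<tau> ^^ Suc n) [j]) i"
    by (simp only: funpow_Suc_right o_apply) simp
  finally show ?case .
qed simp

definition morph_mult_vec :: "'b set \<Rightarrow> ('b \<Rightarrow> 'c list) \<Rightarrow> ('b \<Rightarrow> complex) \<Rightarrow> 'c \<Rightarrow> complex" where
  "morph_mult_vec B f w i = (\<Sum>j\<in>B. of_nat (count_list (f j) i) * w j)"

lemma subst_eigenvalue_iff:
  "subst_eigenvalue B \<sigma> \<mu> \<longleftrightarrow>
     (\<exists>w. (\<exists>i\<in>B. w i \<noteq> 0) \<and> (\<forall>i\<in>B. morph_mult_vec B \<sigma> w i = \<mu> * w i))"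
  by (simp add: subst_eigenvalue_def mat_eigenvalue_on_def morph_mult_vec_def subst_matrix_def)

lemma morph_mult_vec_morph:
  assumes "finite B" and "finite C" and "\<forall>j\<in>B. set (f j) \<subseteq> C"
  shows "morph_mult_vec B (\<lambda>j. morph g (f j)) w i = morph_mult_vec C g (morph_mult_vec B f w) i"
proof -
  have "morph_mult_vec B (\<lambda>j. morph g (f j)) w i =
        (\<Sum>j\<in>B. \<Sum>k\<in>C. of_nat (count_list (f j) k) * of_nat (count_list (g k) i) * w j)"
    unfolding morph_mult_vec_def using assms
    by (intro sum.cong) (simp_all add: count_list_morph sum_distrib_right)
  also have "\<dots> = morph_mult_vec C g (morph_mult_vec B f w) i"
    unfolding morph_mult_vec_def by (subst sum.swap) (simp add: sum_distrib_left mult_ac)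
  finally show ?thesis .
qed

lemma morph_mult_vec_cong:
  "\<lbrakk>\<And>j. j \<in> B \<Longrightarrow> f j = g j; \<And>j. j \<in> B \<Longrightarrow> w j = w' j\<rbrakk>
     \<Longrightarrow> morph_mult_vec B f w i = morph_mult_vec B g w' i"
  unfolding morph_mult_vec_def by simp

lemma morph_mult_vec_scale: "morph_mult_vec B f (\<lambda>j. c * w j) i = c * morph_mult_vec B f w i"
  unfolding morph_mult_vec_def by (simp add: sum_distrib_left mult_ac)

lemma morph_mult_vec_pow:
  fixes \<sigma> :: "'b \<Rightarrow> 'b list"
  assumes "finite B" and "\<forall>j\<in>B. set (\<sigma> j) \<subseteq> B"
    and "\<forall>i\<in>B. morph_mult_vec B \<sigma> w i = \<mu> * w i" and "i \<in> B"
  shows "morph_mult_vec B (\<lambda>j. (morph \<sigma> ^^ k) [j]) w i = \<mu> ^ k * w i"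
  using assms(4)
proof (induction k arbitrary: i)
  case 0
  have "morph_mult_vec B (\<lambda>j. [j]) w i = (\<Sum>j\<in>B. if j = i then w j else 0)"
    unfolding morph_mult_vec_def by (intro sum.cong) auto
  with 0 assms(1) show ?case
    by simp
next
  case (Suc k)
  have "morph_mult_vec B (\<lambda>j. (morph \<sigma> ^^ Suc k) [j]) w i =
        morph_mult_vec B \<sigma> (morph_mult_vec B (\<lambda>j. (morph \<sigma> ^^ k) [j]) w) i"
    using assms(1,2) set_morph_pow_subset[OF assms(2)]
    by (simp add: morph_mult_vec_morph)
  also have "\<dots> = morph_mult_vec B \<sigma> (\<lambda>j. \<mu> ^ k * w j) i"
    using Suc.IH by (intro morph_mult_vec_cong) auto
  also have "\<dots> = \<mu> ^ Suc k * w i"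
    using assms(3) Suc.prems by (simp add: morph_mult_vec_scale)
  finally show ?case .
qed

lemma nonzero_eigenvalue_transfer:
  fixes \<sigma> :: "'b \<Rightarrow> 'b list" and \<sigma>' :: "'c \<Rightarrow> 'c list"
  assumes "finite B" and "finite C"
    and \<sigma>: "\<forall>j\<in>B. set (\<sigma> j) \<subseteq> B" and \<rho>: "\<forall>j\<in>B. set (\<rho> j) \<subseteq> C"
    and intertwine: "\<forall>j\<in>B. morph \<rho> (\<sigma> j) = morph \<sigma>' (\<rho> j)"
    and retract: "\<forall>j\<in>B. morph \<rho>' (\<rho> j) = (morph \<sigma> ^^ k) [j]"
    and "\<mu> \<noteq> 0" and "subst_eigenvalue B \<sigma> \<mu>"
  shows "subst_eigenvalue C \<sigma>' \<mu>"
proof -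
  obtain w i0 where "i0 \<in> B" "w i0 \<noteq> 0" and w: "\<forall>i\<in>B. morph_mult_vec B \<sigma> w i = \<mu> * w i"
    using \<open>subst_eigenvalue B \<sigma> \<mu>\<close> unfolding subst_eigenvalue_iff by blast
  define w' where "w' = morph_mult_vec B \<rho> w"
  have "morph_mult_vec C \<sigma>' w' i = \<mu> * w' i" for i
  proof -
    have "morph_mult_vec C \<sigma>' w' i = morph_mult_vec B (\<lambda>j. morph \<rho> (\<sigma> j)) w i"
      unfolding w'_def using assms(1,2) \<rho> intertwine
      by (simp add: morph_mult_vec_morph[symmetric] cong: morph_mult_vec_cong)
    also have "\<dots> = morph_mult_vec B \<rho> (\<lambda>j. \<mu> * w j) i"
      using assms(1) \<sigma> w by (simp add: morph_mult_vec_morph cong: morph_mult_vec_cong)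
    finally show ?thesis
      by (simp add: w'_def morph_mult_vec_scale)
  qed
  moreover have "\<exists>i\<in>C. w' i \<noteq> 0"
  proof (rule ccontr)
    assume "\<not> (\<exists>i\<in>C. w' i \<noteq> 0)"
    then have "morph_mult_vec C \<rho>' w' i0 = 0"
      by (simp add: morph_mult_vec_def)
    moreover have "morph_mult_vec C \<rho>' w' i0 = \<mu> ^ k * w i0"
      unfolding w'_def using assms(1,2) \<rho> retract \<sigma> w \<open>i0 \<in> B\<close>
      by (simp add: morph_mult_vec_morph[symmetric] morph_mult_vec_pow cong: morph_mult_vec_cong)
    ultimately show False
      using \<open>\<mu> \<noteq> 0\<close> \<open>w i0 \<noteq> 0\<close> by simp
  qed
  ultimately show ?thesis
    unfolding subst_eigenvalue_iff by blast
qed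

section \<open>Occurrences in the fixed point\<close>

text \<open>As \<open>X = \<tau>\<^sup>n(X)\<close>, the image of the letter at position \<open>i\<close> of \<open>X\<close> starts at this position.\<close>
definition morph_pow_pos :: "('a \<Rightarrow> 'a list) \<Rightarrow> nat \<Rightarrow> (nat \<Rightarrow> 'a) \<Rightarrow> nat \<Rightarrow> nat" where
  "morph_pow_pos \<tau> n X i = length ((morph \<tau> ^^ n) (map X [0..<i]))"

lemma map_upt_append: "p \<le> m \<Longrightarrow> m \<le> q \<Longrightarrow> map X [p..<m] @ map X [m..<q] = map X [p..<q]"
  by (metis le_add_diff_inverse map_append upt_add_eq_append)

lemma fixed_point_morph_pow_prefix:
  assumes "is_fixed_point A \<tau> a X"
  shows "(morph \<tau> ^^ n) (map X [0..<m]) = map X [0..<morph_pow_pos \<tau> n X m]"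
proof (induction n)
  case (Suc n)
  have "morph \<tau> (map X [0..<l]) = map X [0..<length (morph \<tau> (map X [0..<l]))]" for l
    using assms by (intro nth_equalityI) (auto simp: is_fixed_point_def subst_word_eq_morph)
  with Suc show ?case
    unfolding morph_pow_pos_def by (metis funpow.simps(2) o_apply)
qed (simp add: morph_pow_pos_def)

lemma fixed_point_morph_pow_segment:
  assumes "is_fixed_point A \<tau> a X" and "i \<le> k"
  shows "morph_pow_pos \<tau> n X i \<le> morph_pow_pos \<tau> n X k"
    and "(morph \<tau> ^^ n) (map X [i..<k]) = map X [morph_pow_pos \<tau> n X i..<morph_pow_pos \<tau> n X k]"
proof -
  have split: "(morph \<tau> ^^ n) (map X [0..<k]) =
      (morph \<tau> ^^ n) (map X [0..<i]) @ (morph \<tau> ^^ n) (map X [i..<k])"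
    by (metis assms(2) map_upt_append morph_pow_append zero_le)
  show "morph_pow_pos \<tau> n X i \<le> morph_pow_pos \<tau> n X k"
    using arg_cong[OF split, of length] by (simp add: morph_pow_pos_def)
  have "(morph \<tau> ^^ n) (map X [i..<k]) = drop (morph_pow_pos \<tau> n X i) ((morph \<tau> ^^ n) (map X [0..<k]))"
    using split by (simp add: morph_pow_pos_def)
  then show "(morph \<tau> ^^ n) (map X [i..<k]) = map X [morph_pow_pos \<tau> n X i..<morph_pow_pos \<tau> n X k]"
    by (simp add: fixed_point_morph_pow_prefix[OF assms(1)] drop_map)
qed

lemma fixed_point_letters:
  assumes "is_fixed_point A \<tau> a X"
  shows "X 0 = a" and "X i \<in> A"
  using assms by (simp_all add: is_fixed_point_def)

lemma occurs_at_iff_map_upt: "occurs_at X w i \<longleftrightarrow> map X [i..<i + length w] = w"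
proof
  show "occurs_at X w i \<Longrightarrow> map X [i..<i + length w] = w"
    by (rule nth_equalityI) (auto simp: occurs_at_def)
  show "map X [i..<i + length w] = w \<Longrightarrow> occurs_at X w i"
    unfolding occurs_at_def by (metis add_diff_cancel_left' length_map length_upt nth_map_upt)
qed

lemma is_prefix_of_iff_occurs_at_0: "is_prefix_of u X \<longleftrightarrow> occurs_at X u 0"
  unfolding is_prefix_of_def occurs_at_iff_map_upt by (metis add_0)

lemma occurs_at_take: "occurs_at X w i \<Longrightarrow> occurs_at X (take k w) i"
  by (simp add: occurs_at_def)

lemma fixed_point_occurs_at_morph_pow:
  assumes "is_fixed_point A \<tau> a X" and "occurs_at X w i"
  shows "occurs_at X ((morph \<tau> ^^ n) w) (morph_pow_pos \<tau> n X i)"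
proof -
  have "(morph \<tau> ^^ n) w = map X [morph_pow_pos \<tau> n X i..<morph_pow_pos \<tau> n X (i + length w)]"
    using assms fixed_point_morph_pow_segment(2)[OF assms(1), of i "i + length w"]
    by (simp add: occurs_at_iff_map_upt)
  moreover have "morph_pow_pos \<tau> n X i \<le> morph_pow_pos \<tau> n X (i + length w)"
    using fixed_point_morph_pow_segment(1)[OF assms(1)] by simp
  ultimately show ?thesis
    by (simp add: occurs_at_iff_map_upt)
qed

lemma primitive_morph_pow_length_unbounded:
  assumes sub: "substitution A \<tau> a" and prim: "primitive A \<tau>" and fp: "is_fixed_point A \<tau> a X"
    and "b \<in> A" and "b \<noteq> a"
  shows "\<exists>n. L \<le> length ((morph \<tau> ^^ n) [a])"
proof -
  have "finite A" "a \<in> A" and letters: "\<forall>c\<in>A. \<tau> c \<noteq> [] \<and> set (\<tau> c) \<subseteq> A"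
    using sub by (auto simp: substitution_def)
  obtain n where "mat_pow_on A (subst_matrix \<tau>) n b a > 0"
    using prim \<open>a \<in> A\<close> \<open>b \<in> A\<close> by (auto simp: primitive_def)
  then have "count_list ((morph \<tau> ^^ n) [a]) b \<noteq> 0"
    using \<open>finite A\<close> letters \<open>a \<in> A\<close> \<open>b \<in> A\<close> by (simp add: mat_pow_on_subst_matrix)
  then have b_in: "b \<in> set ((morph \<tau> ^^ n) [a])"
    by (simp add: count_list_0_iff)
  define p where "p = morph_pow_pos \<tau> n X 1"
  have pre: "(morph \<tau> ^^ n) [a] = map X [0..<p]"
    using fixed_point_morph_pow_prefix[OF fp, of n 1] fixed_point_letters(1)[OF fp] by (simp add: p_def)
  with b_in have "0 < p"
    by (cases p) auto
  with pre have ys: "(morph \<tau> ^^ n) [a] = a # map X [1..<p]" (is "_ = a # ?ys")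
    using fixed_point_letters(1)[OF fp] by (simp add: upt_conv_Cons)
  with b_in \<open>b \<noteq> a\<close> have "?ys \<noteq> []"
    by auto
  have "set ?ys \<subseteq> A"
    using fixed_point_letters(2)[OF fp] by auto
  txt \<open>Each further application of \<open>\<tau>\<^sup>n\<close> to \<open>a\<close> appends the image of the non-empty \<open>?ys\<close>.\<close>
  have "k + 1 \<le> length ((morph \<tau> ^^ (n * k)) [a])" for k
  proof (induction k)
    case (Suc k)
    have "n * Suc k = n * k + n"
      by simp
    then have "(morph \<tau> ^^ (n * Suc k)) [a] = (morph \<tau> ^^ (n * k)) ([a] @ ?ys)"
      using ys by (simp only: funpow_add o_apply) simp
    also have "\<dots> = (morph \<tau> ^^ (n * k)) [a] @ (morph \<tau> ^^ (n * k)) ?ys"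
      by (rule morph_pow_append)
    finally have "(morph \<tau> ^^ (n * Suc k)) [a] = (morph \<tau> ^^ (n * k)) [a] @ (morph \<tau> ^^ (n * k)) ?ys" .
    moreover have "1 \<le> length ((morph \<tau> ^^ (n * k)) ?ys)"
      using length_morph_pow_ge[OF letters \<open>set ?ys \<subseteq> A\<close>, of "n * k"] \<open>?ys \<noteq> []\<close>
      by (metis One_nat_def Suc_leI length_greater_0_conv order_trans)
    ultimately show ?case
      using Suc.IH by simp
  qed simp
  from this[of L] show ?thesis
    by (intro exI[of _ "n * L"]) simp
qed

lemma fixed_point_prefix_occurs_transfer:
  assumes sub: "substitution A \<tau> a" and prim: "primitive A \<tau>" and fp: "is_fixed_point A \<tau> a X"
    and u: "is_prefix_of u X" and v: "v \<noteq> []" "is_prefix_of v X"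
  shows "\<exists>n. \<forall>i. occurs_at X v i \<longrightarrow> occurs_at X u (morph_pow_pos \<tau> n X i)"
proof (cases "\<exists>b\<in>A. b \<noteq> a")
  case False
  then have "X i = a" for i
    using fixed_point_letters[OF fp] by blast
  then have "occurs_at X u p" for p
    using u by (auto simp: is_prefix_of_iff_occurs_at_0 occurs_at_def)
  then show ?thesis
    by blast
next
  case True
  then obtain b where "b \<in> A" "b \<noteq> a" by blast
  then obtain n where n: "length u \<le> length ((morph \<tau> ^^ n) [a])"
    using primitive_morph_pow_length_unbounded[OF sub prim fp] by blast
  define l where "l = length v"
  have "v = map X [0..<l]"
    using v(2) unfolding l_def is_prefix_of_def .
  moreover have "0 < l"
    using v(1) by (simp add: l_def)
  ultimately have "v = [a] @ map X [1..<l]"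
    using fixed_point_letters(1)[OF fp] by (simp add: upt_conv_Cons)
  then have "(morph \<tau> ^^ n) v = (morph \<tau> ^^ n) [a] @ (morph \<tau> ^^ n) (map X [1..<l])"
    by (subst \<open>v = [a] @ map X [1..<l]\<close>) (rule morph_pow_append)
  with n have len: "length u \<le> length ((morph \<tau> ^^ n) v)"
    by simp
  have "(morph \<tau> ^^ n) v = map X [0..<morph_pow_pos \<tau> n X l]"
    using fixed_point_morph_pow_prefix[OF fp, of n l] \<open>v = map X [0..<l]\<close> by simp
  with len have "take (length u) ((morph \<tau> ^^ n) v) = map X [0..<length u]"
    by (simp add: take_map)
  also have "\<dots> = u"
    using u unfolding is_prefix_of_def by (rule sym)
  finally have take_u: "take (length u) ((morph \<tau> ^^ n) v) = u" .
  have "occurs_at X u (morph_pow_pos \<tau> n X i)" if "occurs_at X v i" for i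
    using occurs_at_take[OF fixed_point_occurs_at_morph_pow[OF fp that, where n=n], of "length u"] take_u
    by simp
  then show ?thesis
    by blast
qed

section \<open>Return words\<close>

lemma return_enum_return_word:
  assumes "return_enum X u N \<Theta>" and "z \<in> {1..N}"
  shows "return_word X u (\<Theta> z)"
  using assms unfolding return_enum_def bij_betw_def by auto

lemma return_word_in_return_enum:
  assumes "return_enum X u N \<Theta>" and "return_word X u w"
  shows "\<exists>z\<in>{1..N}. \<Theta> z = w"
proof -
  have "w \<in> \<Theta> ` {1..N}"
    using assms unfolding return_enum_def bij_betw_def by auto
  then show ?thesis
    by auto
qed

lemma return_word_nonempty: "return_word X u w \<Longrightarrow> w \<noteq> []"
  unfolding return_word_def successive_occ_def by auto

lemma return_enum_factorization:
  assumes "return_enum X u N \<Theta>" and "p \<le> q" and "occurs_at X u p" and "occurs_at X u q"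
  shows "\<exists>xs. set xs \<subseteq> {1..N} \<and> morph \<Theta> xs = map X [p..<q]"
  using assms(2-)
proof (induction "q - p" arbitrary: p rule: less_induct)
  case less
  show ?case
  proof (cases "p = q")
    case True
    then show ?thesis
      by (intro exI[of _ "[]"]) simp
  next
    case False
    define m where "m = (LEAST l. p < l \<and> occurs_at X u l)"
    have m: "p < m" "occurs_at X u m" "m \<le> q"
      using LeastI[of "\<lambda>l. p < l \<and> occurs_at X u l" q] Least_le[of "\<lambda>l. p < l \<and> occurs_at X u l" q]
        False less.prems unfolding m_def by auto
    have "q - m < q - p"
      using m by linarith
    have "\<not> occurs_at X u l" if "p < l" "l < m" for l
      using not_less_Least[of l "\<lambda>l. p < l \<and> occurs_at X u l"] that unfolding m_def by blast
    then have "return_word X u (map X [p..<m])"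
      using m less.prems unfolding return_word_def successive_occ_def by blast
    then obtain z where "z \<in> {1..N}" "\<Theta> z = map X [p..<m]"
      using return_word_in_return_enum[OF assms(1)] by blast
    moreover obtain xs where "set xs \<subseteq> {1..N}" "morph \<Theta> xs = map X [m..<q]"
      using less.hyps[of m] m less.prems \<open>q - m < q - p\<close> by blast
    ultimately show ?thesis
      using map_upt_append[of p m q X] m by (intro exI[of _ "z # xs"]) simp
  qed
qed

lemma return_word_prefix: "return_word X u w \<Longrightarrow> prefix u (w @ u)"
proof -
  assume "return_word X u w"
  then obtain i j where "i < j" "occurs_at X u i" "occurs_at X u j" "w = map X [i..<j]"
    unfolding return_word_def successive_occ_def by blast
  then have "w @ u = map X [i..<j + length u]"
    using map_upt_append[of i j "j + length u" X] by (simp add: occurs_at_iff_map_upt)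
  also have "\<dots> = map X [i..<i + length u] @ map X [i + length u..<j + length u]"
    using map_upt_append[of i "i + length u" "j + length u" X] \<open>i < j\<close> by simp
  also have "\<dots> = u @ map X [i + length u..<j + length u]"
    using \<open>occurs_at X u i\<close> by (simp add: occurs_at_iff_map_upt)
  finally show ?thesis
    by (rule prefixI)
qed

lemma morph_return_enum_prefix:
  assumes "return_enum X u N \<Theta>" and "set xs \<subseteq> {1..N}"
  shows "prefix u (morph \<Theta> xs @ u)"
  using assms(2)
proof (induction xs)
  case (Cons x xs)
  then obtain r where "morph \<Theta> xs @ u = u @ r"
    by (auto elim: prefixE)
  moreover have "prefix u (\<Theta> x @ u)"
    using Cons.prems return_word_prefix[OF return_enum_return_word[OF assms(1)]] by simp
  ultimately show ?case
    by (metis append_assoc morph_Cons prefix_prefix)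
qed simp

lemma return_word_no_inner_occurrence:
  assumes "return_word X u (d @ e)" and "d \<noteq> []" and "e \<noteq> []"
  shows "\<not> prefix u (e @ u)"
proof
  assume "prefix u (e @ u)"
  obtain i j where ij: "successive_occ X u i j" "d @ e = map X [i..<j]"
    using assms(1) unfolding return_word_def by blast
  then have "occurs_at X u j" "i < j"
    unfolding successive_occ_def by auto
  define l where "l = i + length d"
  have "length d + length e = j - i"
    using arg_cong[OF ij(2), of length] by simp
  moreover have "0 < length e"
    using assms(3) by simp
  ultimately have "l < j"
    using \<open>i < j\<close> unfolding l_def by linarith
  have "e @ u = drop (length d) (map X [i..<j] @ map X [j..<j + length u])"
    using ij(2) \<open>occurs_at X u j\<close> by (simp flip: ij(2) add: occurs_at_iff_map_upt)
  also have "\<dots> = map X [l..<j + length u]"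
    using \<open>i < j\<close> \<open>l < j\<close> by (simp add: map_upt_append drop_map l_def)
  finally have "map X [l..<l + length u] = u"
    using \<open>prefix u (e @ u)\<close> \<open>l < j\<close>
    by (metis add_le_mono1 less_imp_le prefix_def take_append take_map take_upt append_eq_conv_conj length_append)
  then have "occurs_at X u l"
    by (simp add: occurs_at_iff_map_upt)
  moreover have "i < l"
    using assms(2) by (simp add: l_def)
  ultimately show False
    using ij(1) \<open>l < j\<close> unfolding successive_occ_def by blast
qed

lemma return_word_prefix_unique:
  assumes "return_word X u w1" and "return_word X u w2" and "w1 @ s1 = w2 @ s2"
    and "prefix u (s1 @ u)" and "prefix u (s2 @ u)"
  shows "w1 = w2"
proof -
  have no_strict: "\<not> strict_prefix w w'"
    if rw: "return_word X u w" and rw': "return_word X u w'" and eq: "w @ s = w' @ s'"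
      and pre: "prefix u (s @ u)" and pre': "prefix u (s' @ u)"
    for w w' s s'
  proof
    assume "strict_prefix w w'"
    then obtain e where e: "w' = w @ e" "e \<noteq> []"
      by (auto elim: strict_prefixE')
    with eq have "s = e @ s'"
      by simp
    obtain r where "s' @ u = u @ r"
      using pre' by (auto elim: prefixE)
    with \<open>s = e @ s'\<close> pre have "prefix u ((e @ u) @ r)"
      by simp
    then have "prefix u (e @ u)"
      by (rule prefix_length_prefix) simp_all
    with e show False
      using return_word_no_inner_occurrence[of X u w e] rw' return_word_nonempty[OF rw] by simp
  qed
  have "prefix w1 (w2 @ s2)" "prefix w2 (w2 @ s2)"
    using assms(3) by (metis prefixI)+
  then have "prefix w1 w2 \<or> prefix w2 w1"
    by (rule prefix_same_cases)
  then show ?thesis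
    using no_strict[OF assms] no_strict[OF assms(2,1) assms(3)[symmetric] assms(5,4)]
    by (auto simp: strict_prefix_def)
qed

lemma morph_return_enum_inj:
  assumes "return_enum X u N \<Theta>"
    and "set xs \<subseteq> {1..N}" and "set ys \<subseteq> {1..N}" and "morph \<Theta> xs = morph \<Theta> ys"
  shows "xs = ys"
  using assms(2-)
proof (induction xs arbitrary: ys)
  case Nil
  then show ?case
    using return_word_nonempty[OF return_enum_return_word[OF assms(1)]] by (cases ys) auto
next
  case (Cons x xs)
  then obtain y ys' where ys: "ys = y # ys'"
    using return_word_nonempty[OF return_enum_return_word[OF assms(1)]] by (cases ys) auto
  have "x \<in> {1..N}" "y \<in> {1..N}" "set xs \<subseteq> {1..N}" "set ys' \<subseteq> {1..N}"
    using Cons.prems ys by auto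
  moreover have "\<Theta> x @ morph \<Theta> xs = \<Theta> y @ morph \<Theta> ys'"
    using Cons.prems(3) ys by simp
  ultimately have "\<Theta> x = \<Theta> y"
    using return_word_prefix_unique[OF return_enum_return_word[OF assms(1)]
        return_enum_return_word[OF assms(1)] _ morph_return_enum_prefix[OF assms(1)]
        morph_return_enum_prefix[OF assms(1)]]
    by blast
  moreover have "inj_on \<Theta> {1..N}"
    using assms(1) unfolding return_enum_def bij_betw_def by blast
  ultimately have "x = y"
    using \<open>x \<in> {1..N}\<close> \<open>y \<in> {1..N}\<close> by (auto dest: inj_onD)
  moreover have "xs = ys'"
    using Cons.IH \<open>set xs \<subseteq> {1..N}\<close> \<open>set ys' \<subseteq> {1..N}\<close> Cons.prems(3) ys \<open>\<Theta> x = \<Theta> y\<close> by simp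
  ultimately show ?case
    using ys by simp
qed

section \<open>Return substitutions\<close>

lemma return_subst_letters:
  "return_subst \<tau> X u N \<Theta> \<sigma> \<Longrightarrow> \<forall>j\<in>{1..N}. set (\<sigma> j) \<subseteq> {1..N}"
  unfolding return_subst_def by blast

lemma return_subst_morph_pow:
  assumes "return_subst \<tau> X u N \<Theta> \<sigma>" and "set xs \<subseteq> {1..N}"
  shows "(morph \<tau> ^^ k) (morph \<Theta> xs) = morph \<Theta> ((morph \<sigma> ^^ k) xs)"
proof (induction k)
  case (Suc k)
  have step: "morph \<tau> (morph \<Theta> ys) = morph \<Theta> (morph \<sigma> ys)" if "set ys \<subseteq> {1..N}" for ys
    using assms(1) that unfolding return_subst_def subst_word_eq_morph morph_morph
    by (intro morph_cong) (auto simp flip: morph_def)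
  have "set ((morph \<sigma> ^^ k) xs) \<subseteq> {1..N}"
    using set_morph_pow_subset[OF return_subst_letters[OF assms(1)] assms(2)] .
  with Suc show ?case
    by (simp add: step)
qed simp

lemma fixed_point_return_words_morph_pow:
  assumes sub: "substitution A \<tau> a" and prim: "primitive A \<tau>" and fp: "is_fixed_point A \<tau> a X"
    and u: "is_prefix_of u X" and v: "v \<noteq> []" "is_prefix_of v X"
    and eu: "return_enum X u Nu \<Theta>u" and ev: "return_enum X v Nv \<Theta>v"
  shows "\<exists>n \<rho>. \<forall>j\<in>{1..Nv}. set (\<rho> j) \<subseteq> {1..Nu} \<and> morph \<Theta>u (\<rho> j) = (morph \<tau> ^^ n) (\<Theta>v j)"
proof -
  obtain n where n: "\<And>i. occurs_at X v i \<Longrightarrow> occurs_at X u (morph_pow_pos \<tau> n X i)"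
    using fixed_point_prefix_occurs_transfer[OF sub prim fp u v] by blast
  have "\<exists>xs. set xs \<subseteq> {1..Nu} \<and> morph \<Theta>u xs = (morph \<tau> ^^ n) (\<Theta>v j)" if j: "j \<in> {1..Nv}" for j
  proof -
    obtain i k where "successive_occ X v i k" "\<Theta>v j = map X [i..<k]"
      using return_enum_return_word[OF ev j] unfolding return_word_def by blast
    then have "i \<le> k" "occurs_at X v i" "occurs_at X v k"
      "(morph \<tau> ^^ n) (\<Theta>v j) = map X [morph_pow_pos \<tau> n X i..<morph_pow_pos \<tau> n X k]"
      using fixed_point_morph_pow_segment(2)[OF fp] unfolding successive_occ_def by auto
    then show ?thesis
      using return_enum_factorization[OF eu fixed_point_morph_pow_segment(1)[OF fp \<open>i \<le> k\<close>] n n]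
      by auto
  qed
  then show ?thesis
    by metis
qed

lemma return_subst_intertwine:
  assumes ru: "return_subst \<tau> X u Nu \<Theta>u \<sigma>u" and rv: "return_subst \<tau> X v Nv \<Theta>v \<sigma>v"
    and \<rho>: "\<forall>j\<in>{1..Nv}. set (\<rho> j) \<subseteq> {1..Nu} \<and> morph \<Theta>u (\<rho> j) = (morph \<tau> ^^ n) (\<Theta>v j)"
    and "j \<in> {1..Nv}"
  shows "morph \<rho> (\<sigma>v j) = morph \<sigma>u (\<rho> j)"
proof (rule morph_return_enum_inj)
  show "return_enum X u Nu \<Theta>u"
    using ru unfolding return_subst_def by blast
  have \<sigma>v: "set (\<sigma>v j) \<subseteq> {1..Nv}" and \<rho>j: "set (\<rho> j) \<subseteq> {1..Nu}"
    using return_subst_letters[OF rv] \<rho> \<open>j \<in> {1..Nv}\<close> by auto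
  then show "set (morph \<rho> (\<sigma>v j)) \<subseteq> {1..Nu}" "set (morph \<sigma>u (\<rho> j)) \<subseteq> {1..Nu}"
    using \<rho> return_subst_letters[OF ru] by fastforce+
  have "morph \<Theta>u (morph \<rho> (\<sigma>v j)) = (morph \<tau> ^^ n) (morph \<Theta>v (\<sigma>v j))"
    using \<rho> \<sigma>v unfolding morph_morph morph_pow_morph by (intro morph_cong) auto
  also have "\<dots> = (morph \<tau> ^^ n) (morph \<tau> (\<Theta>v j))"
    using return_subst_morph_pow[OF rv, of "[j]" 1] \<open>j \<in> {1..Nv}\<close> by simp
  also have "\<dots> = morph \<tau> (morph \<Theta>u (\<rho> j))"
    using \<rho> \<open>j \<in> {1..Nv}\<close> by (simp add: funpow_swap1)
  also have "\<dots> = morph \<Theta>u (morph \<sigma>u (\<rho> j))"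
    using return_subst_morph_pow[OF ru \<rho>j, of 1] by simp
  finally show "morph \<Theta>u (morph \<rho> (\<sigma>v j)) = morph \<Theta>u (morph \<sigma>u (\<rho> j))" .
qed

lemma return_subst_round_trip:
  assumes eu: "return_enum X u Nu \<Theta>u" and rv: "return_subst \<tau> X v Nv \<Theta>v \<sigma>v"
    and \<rho>: "\<forall>j\<in>{1..Nv}. set (\<rho> j) \<subseteq> {1..Nu} \<and> morph \<Theta>u (\<rho> j) = (morph \<tau> ^^ n) (\<Theta>v j)"
    and \<rho>': "\<forall>j\<in>{1..Nu}. set (\<rho>' j) \<subseteq> {1..Nv} \<and> morph \<Theta>v (\<rho>' j) = (morph \<tau> ^^ m) (\<Theta>u j)"
    and "j \<in> {1..Nv}"
  shows "morph \<rho>' (\<rho> j) = (morph \<sigma>v ^^ (m + n)) [j]"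
proof (rule morph_return_enum_inj)
  show "return_enum X v Nv \<Theta>v"
    using rv unfolding return_subst_def by blast
  show "set (morph \<rho>' (\<rho> j)) \<subseteq> {1..Nv}"
    using \<rho> \<rho>' \<open>j \<in> {1..Nv}\<close> by fastforce
  show "set ((morph \<sigma>v ^^ (m + n)) [j]) \<subseteq> {1..Nv}"
    using set_morph_pow_subset[OF return_subst_letters[OF rv]] \<open>j \<in> {1..Nv}\<close> by simp
  have "set (\<rho> j) \<subseteq> {1..Nu}"
    using \<rho> \<open>j \<in> {1..Nv}\<close> by blast
  then have "morph \<Theta>v (morph \<rho>' (\<rho> j)) = (morph \<tau> ^^ m) (morph \<Theta>u (\<rho> j))"
    using \<rho>' unfolding morph_morph morph_pow_morph by (intro morph_cong) auto
  also have "\<dots> = (morph \<tau> ^^ (m + n)) (morph \<Theta>v [j])"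
    using \<rho> \<open>j \<in> {1..Nv}\<close> by (simp add: funpow_add)
  also have "\<dots> = morph \<Theta>v ((morph \<sigma>v ^^ (m + n)) [j])"
    using return_subst_morph_pow[OF rv, of "[j]"] \<open>j \<in> {1..Nv}\<close> by simp
  finally show "morph \<Theta>v (morph \<rho>' (\<rho> j)) = morph \<Theta>v ((morph \<sigma>v ^^ (m + n)) [j])" .
qed

lemma return_subst_nonzero_eigenvalue:
  assumes sub: "substitution A \<tau> a" and prim: "primitive A \<tau>" and fp: "is_fixed_point A \<tau> a X"
    and u: "u \<noteq> []" "is_prefix_of u X" and v: "v \<noteq> []" "is_prefix_of v X"
    and ru: "return_subst \<tau> X u Nu \<Theta>u \<sigma>u" and rv: "return_subst \<tau> X v Nv \<Theta>v \<sigma>v"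
    and "\<mu> \<noteq> 0" and "subst_eigenvalue {1..Nv} \<sigma>v \<mu>"
  shows "subst_eigenvalue {1..Nu} \<sigma>u \<mu>"
proof -
  have eu: "return_enum X u Nu \<Theta>u" and ev: "return_enum X v Nv \<Theta>v"
    using ru rv unfolding return_subst_def by blast+
  obtain n \<rho> where \<rho>: "\<forall>j\<in>{1..Nv}. set (\<rho> j) \<subseteq> {1..Nu} \<and> morph \<Theta>u (\<rho> j) = (morph \<tau> ^^ n) (\<Theta>v j)"
    using fixed_point_return_words_morph_pow[OF sub prim fp u(2) v eu ev] by blast
  obtain m \<rho>' where \<rho>': "\<forall>j\<in>{1..Nu}. set (\<rho>' j) \<subseteq> {1..Nv} \<and> morph \<Theta>v (\<rho>' j) = (morph \<tau> ^^ m) (\<Theta>u j)"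
    using fixed_point_return_words_morph_pow[OF sub prim fp v(2) u ev eu] by blast
  show ?thesis
  proof (rule nonzero_eigenvalue_transfer)
    show "\<forall>j\<in>{1..Nv}. morph \<rho> (\<sigma>v j) = morph \<sigma>u (\<rho> j)"
      using return_subst_intertwine[OF ru rv \<rho>] by blast
    show "\<forall>j\<in>{1..Nv}. morph \<rho>' (\<rho> j) = (morph \<sigma>v ^^ (m + n)) [j]"
      using return_subst_round_trip[OF eu rv \<rho> \<rho>'] by blast
  qed (use return_subst_letters[OF rv] \<rho> assms(10,11) in auto)
qed

theorem corollary9:
  fixes \<tau> :: "'a \<Rightarrow> 'a list" and A :: "'a set" and a :: 'a and X :: "nat \<Rightarrow> 'a"
    and u v :: "'a list" and Nu Nv :: nat
    and \<Theta>u \<Theta>v :: "nat \<Rightarrow> 'a list" and \<sigma>u \<sigma>v :: "nat \<Rightarrow> nat list"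
  assumes "substitution A \<tau> a" and "primitive A \<tau>" and "is_fixed_point A \<tau> a X"
    and "u \<noteq> []" and "is_prefix_of u X"
    and "v \<noteq> []" and "is_prefix_of v X"
    and "return_subst \<tau> X u Nu \<Theta>u \<sigma>u"
    and "return_subst \<tau> X v Nv \<Theta>v \<sigma>v"
  shows "{\<mu>. \<mu> \<noteq> 0 \<and> subst_eigenvalue {1..Nu} \<sigma>u \<mu>} = {\<mu>. \<mu> \<noteq> 0 \<and> subst_eigenvalue {1..Nv} \<sigma>v \<mu>}"
  using return_subst_nonzero_eigenvalue[OF assms(1-3) assms(4,5) assms(6,7) assms(8,9)]
    return_subst_nonzero_eigenvalue[OF assms(1-3) assms(6,7) assms(4,5) assms(9,8)]
  by blast

end
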